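(* Fix $k\in\mathbb{N}$, positive constants $b_0,b_1,b_2,\lambda_0,\lambda_1$ and $\mu\in(0,1)$. There exists $C>0$ depending only on $b_0,b_1,\lambda_0,\lambda_1,\mu$ (and the fixed $k$) such that the following holds. Let $T\geq10$, $\ell<r$, $a^\pm\in\mathbb{R}^k$, $g:[\ell,r]\to\mathbb{R}$ Lipschitz with $g(\ell)=g(r)=0$, and $P\subset\big((\ell,\ell+T^{1/2})\cup(r-T^{1/2},r)\big)\cap(\ell,r)$ finite. Suppose that $r-\ell\leq b_0T$, $|P|\leq b_0T$, $|g(x)-g(y)|\leq b_1T|x-y|$ for all $x,y$, $a^\pm_j-a^\pm_{j+1}\geq\lambda_0T^{1/2}$ for $j\in\{1,\dots,k-1\}$, $a^-_k-g(\ell)\geq\lambda_1T$, $a^+_k-g(r)\geq\lambda_1T$, $a^-_1-g(\ell)\leq b_2T^2$, $a^+_1-g(r)\leq b_2T^2$. Then $\mathbb{P}_{\mathcal{L}}(\mathsf{H})\geq C^{-1}e^{-CT^{5/2}}$.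
   Context: $\mathbb{P}_{\mathrm{free}}$ is the law of $k$ independent Brownian bridges (diffusion parameter one) $\mathcal{L}=(\mathcal{L}_1,\dots,\mathcal{L}_k)$ on $[\ell,r]$ with $\mathcal{L}_j(\ell)=a^-_j$, $\mathcal{L}_j(r)=a^+_j$. $W(\mathcal{L})=1$ if $\mathcal{L}_j(p)>g(p)$ for all $p\in P$ and all $j$, and $0$ otherwise; $\mathbb{P}_{\mathcal{L}}$ is given by $d\mathbb{P}_{\mathcal{L}}/d\mathbb{P}_{\mathrm{free}}=W/\mathbb{E}_{\mathrm{free}}[W]$. $\mathsf{H}$ is the event that $\mathcal{L}_j(p)-\mathcal{L}_{j+1}(p)\geq\mu\lambda_0T^{1/2}$ for all $p\in P$, $j\in\{1,\dots,k-1\}$, and $\mathcal{L}_k(p)-g(p)\geq\mu\lambda_1T$ for all $p\in P$. *)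

theory Defs
  imports "HOL-Probability.Probability"
begin

definition heat_kernel :: "real \<Rightarrow> real \<Rightarrow> real" where
  "heat_kernel t x = exp (- (x\<^sup>2) / (2 * t)) / sqrt (2 * pi * t)"

text \<open>Joint density of a single Brownian bridge on [l,r] from a to b, observed at the
  strictly increasing interior times ps, evaluated at the values y p (p in ps).\<close>
definition bb_density :: "real \<Rightarrow> real \<Rightarrow> real \<Rightarrow> real \<Rightarrow> real list \<Rightarrow> (real \<Rightarrow> real) \<Rightarrow> real" where
  "bb_density l r a b ps y =
     (let ts = l # ps @ [r]; xs = a # map y ps @ [b] in
      (\<Prod>i<length ps + 1. heat_kernel (ts ! (i+1) - ts ! i) (xs ! (i+1) - xs ! i))
      / heat_kernel (r - l) (b - a))"

text \<open>Finite-dimensional marginal of P_free: the law of (L_j(p)) for j in {1..k}, p in P, where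
  L_1,...,L_k are independent Brownian bridges on [l,r] with L_j(l) = am j, L_j(r) = ap j.\<close>
definition free_fdd ::
  "nat \<Rightarrow> real \<Rightarrow> real \<Rightarrow> (nat \<Rightarrow> real) \<Rightarrow> (nat \<Rightarrow> real) \<Rightarrow> real set \<Rightarrow> (nat \<times> real \<Rightarrow> real) measure" where
  "free_fdd k l r am ap P =
     density (PiM ({1..k} \<times> P) (\<lambda>_. lborel))
       (\<lambda>x. ennreal (\<Prod>j\<in>{1..k}. bb_density l r (am j) (ap j) (sorted_list_of_set P) (\<lambda>p. x (j, p))))"

definition W_event :: "nat \<Rightarrow> real set \<Rightarrow> (real \<Rightarrow> real) \<Rightarrow> (nat \<times> real \<Rightarrow> real) set" where
  "W_event k P g = {x \<in> space (PiM ({1..k} \<times> P) (\<lambda>_. lborel)). \<forall>j\<in>{1..k}. \<forall>p\<in>P. x (j, p) > g p}"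

definition H_event :: "nat \<Rightarrow> real set \<Rightarrow> (real \<Rightarrow> real) \<Rightarrow> real \<Rightarrow> real \<Rightarrow> real \<Rightarrow> real \<Rightarrow>
    (nat \<times> real \<Rightarrow> real) set" where
  "H_event k P g \<mu> lam0 lam1 T = {x \<in> space (PiM ({1..k} \<times> P) (\<lambda>_. lborel)).
      (\<forall>p\<in>P. \<forall>j\<in>{1..<k}. x (j, p) - x (j+1, p) \<ge> \<mu> * lam0 * sqrt T)
    \<and> (\<forall>p\<in>P. x (k, p) - g p \<ge> \<mu> * lam1 * T)}"

text \<open>P_L(H) = E_free[W 1_H] / E_free[W].\<close>
definition PL_H :: "nat \<Rightarrow> real \<Rightarrow> real \<Rightarrow> (nat \<Rightarrow> real) \<Rightarrow> (nat \<Rightarrow> real) \<Rightarrow> real set \<Rightarrow> (real \<Rightarrow> real)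
    \<Rightarrow> real \<Rightarrow> real \<Rightarrow> real \<Rightarrow> real \<Rightarrow> real" where
  "PL_H k l r am ap P g \<mu> lam0 lam1 T =
     measure (free_fdd k l r am ap P) (W_event k P g \<inter> H_event k P g \<mu> lam0 lam1 T)
     / measure (free_fdd k l r am ap P) (W_event k P g)"

end

theory Submission
  imports Defs
begin

text \<open>Since \<open>P_free(W) \<le> 1\<close>, it suffices to bound \<open>P_free(W \<inter> H)\<close> from below. Around each
  curve put a tube of fixed width \<open>w\<close> about the chord joining its boundary values, lifted by the
  tent \<open>K min(p - l, r - p)\<close> with \<open>K = b1 T\<close>; the tent dominates \<open>g\<close>, so for small \<open>w\<close> the
  whole tube lies in \<open>W \<inter> H\<close>. The Brownian bridge density is a product of heat kernels, so
  the observations can be integrated out one at a time, the latest first: given the earlier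
  ones, each is Gaussian with the bridge mean and variance, and its window in the tube has mass
  at least \<open>c / (1 + sqrt (b0 T)) * exp (- cost)\<close> with \<open>c\<close> depending only on \<open>w\<close>. The cost is
  at most \<open>4 K\<^sup>2\<close> times the time step and is only paid left of the midpoint, so it telescopes
  over the points within \<open>sqrt T\<close> of \<open>l\<close> and is paid once more for the first point beyond the
  midpoint: at most \<open>8 K\<^sup>2 sqrt T = 8 b1\<^sup>2 T^(5/2)\<close> in total. With \<open>|P| \<le> b0 T\<close> the tube has
  probability at least \<open>exp (- C T^(5/2))\<close>.\<close>

section \<open>Gaussian kernels\<close>

lemma heat_kernel_pos: "0 < t \<Longrightarrow> 0 < heat_kernel t x"
  by (simp add: heat_kernel_def)

lemma heat_kernel_nonneg: "0 \<le> t \<Longrightarrow> 0 \<le> heat_kernel t x"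
  by (simp add: heat_kernel_def)

lemma heat_kernel_bridge:
  fixes s t a b y :: real
  assumes s: "0 < s" and t: "0 < t"
  shows "heat_kernel s (y - a) * heat_kernel t (b - y) =
    heat_kernel (s + t) (b - a) * normal_density (a + s / (s + t) * (b - a)) (sqrt (s * t / (s + t))) y"
proof -
  define d where "d = s + t"
  define X where "X = d * (y - a) - s * (b - a)"
  have d: "0 < d" using s t by (simp add: d_def)
  have "- (y - a)\<^sup>2 / (2 * s) + - (b - y)\<^sup>2 / (2 * t) =
      - (t * d * (y - a)\<^sup>2 + s * d * (b - y)\<^sup>2) / (2 * s * t * d)"
    using s t d by (simp add: field_simps)
  also have "t * d * (y - a)\<^sup>2 + s * d * (b - y)\<^sup>2 = s * t * (b - a)\<^sup>2 + X\<^sup>2"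
    unfolding X_def d_def by (simp add: power2_eq_square algebra_simps)
  also have "- (s * t * (b - a)\<^sup>2 + X\<^sup>2) / (2 * s * t * d) =
      - (b - a)\<^sup>2 / (2 * d) + - (X / d)\<^sup>2 / (2 * (s * t / d))"
    using s t d by (simp add: field_simps power2_eq_square)
  also have "X / d = y - (a + s / d * (b - a))"
    using d unfolding X_def by (simp add: field_simps)
  finally have exponent: "- (y - a)\<^sup>2 / (2 * s) + - (b - y)\<^sup>2 / (2 * t) =
      - (b - a)\<^sup>2 / (2 * (s + t)) + - (y - (a + s / (s + t) * (b - a)))\<^sup>2 / (2 * (s * t / (s + t)))"
    unfolding d_def .
  have normaliser: "sqrt (2 * pi * s) * sqrt (2 * pi * t) =
      sqrt (2 * pi * (s + t)) * sqrt (2 * pi * (s * t / (s + t)))"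
    using s t by (simp add: real_sqrt_mult[symmetric] field_simps)
  have "heat_kernel s (y - a) * heat_kernel t (b - y) =
      exp (- (y - a)\<^sup>2 / (2 * s) + - (b - y)\<^sup>2 / (2 * t)) / (sqrt (2 * pi * s) * sqrt (2 * pi * t))"
    unfolding heat_kernel_def exp_add by simp
  also have "\<dots> = exp (- (b - a)\<^sup>2 / (2 * (s + t)) + - (y - (a + s / (s + t) * (b - a)))\<^sup>2 / (2 * (s * t / (s + t))))
      / (sqrt (2 * pi * (s + t)) * sqrt (2 * pi * (s * t / (s + t))))"
    by (simp only: exponent normaliser)
  also have "\<dots> = heat_kernel (s + t) (b - a) * normal_density (a + s / (s + t) * (b - a)) (sqrt (s * t / (s + t))) y"
    using s t unfolding heat_kernel_def normal_density_def exp_add by simp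
  finally show ?thesis .
qed

lemma nn_integral_normal_density_interval_ge:
  fixes \<mu> \<sigma> c w D :: real
  assumes \<sigma>: "0 < \<sigma>" and w: "0 < w" and D: "0 \<le> D" and dist: "\<bar>\<mu> - c\<bar> \<le> w + D"
  shows "ennreal (min (w / \<sigma>) 1 * exp (- ((D / \<sigma> + 1)\<^sup>2 / 2)) / sqrt (2 * pi))
     \<le> (\<integral>\<^sup>+ y. ennreal (normal_density \<mu> \<sigma> y) * indicator {c - w..c + w} y \<partial>lborel)"
proof -
  define L where "L = min w \<sigma>"
  have L: "0 < L" "L \<le> w" "L \<le> \<sigma>" using \<sigma> w by (auto simp: L_def)
  obtain u where u: "c - w \<le> u" "u + L \<le> c + w" and near: "\<And>y. y \<in> {u..u + L} \<Longrightarrow> \<bar>y - \<mu>\<bar> \<le> D + L"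
  proof (cases "c \<le> \<mu>")
    case True
    show ?thesis
      by (rule that[of "min \<mu> (c + w) - L"]) (use True L dist D in \<open>auto simp: abs_if split: if_splits\<close>)
  next
    case False
    show ?thesis
      by (rule that[of "max \<mu> (c - w)"]) (use False L dist D in \<open>auto simp: abs_if split: if_splits\<close>)
  qed
  define m where "m = exp (- ((D + L)\<^sup>2 / (2 * \<sigma>\<^sup>2))) / (\<sigma> * sqrt (2 * pi))"
  have m: "0 \<le> m" using \<sigma> by (simp add: m_def)
  have density_ge: "m \<le> normal_density \<mu> \<sigma> y" if "y \<in> {u..u + L}" for y
  proof -
    have "(y - \<mu>)\<^sup>2 \<le> (D + L)\<^sup>2"
      using near[OF that] by (metis abs_le_square_iff abs_of_nonneg D L(1) add_nonneg_nonneg less_imp_le)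
    then have "exp (- ((D + L)\<^sup>2 / (2 * \<sigma>\<^sup>2))) \<le> exp (- (y - \<mu>)\<^sup>2 / (2 * \<sigma>\<^sup>2))"
      using \<sigma> by (simp add: divide_right_mono)
    moreover have "sqrt (2 * pi * \<sigma>\<^sup>2) = \<sigma> * sqrt (2 * pi)"
      using \<sigma> by (simp add: real_sqrt_mult mult.commute)
    ultimately show ?thesis
      using \<sigma> unfolding m_def normal_density_def by (simp add: divide_right_mono)
  qed
  have "min (w / \<sigma>) 1 * exp (- ((D / \<sigma> + 1)\<^sup>2 / 2)) / sqrt (2 * pi) \<le> m * L"
  proof -
    have "(D + L)\<^sup>2 / (2 * \<sigma>\<^sup>2) = (D / \<sigma> + L / \<sigma>)\<^sup>2 / 2"
      using \<sigma> by (simp add: field_simps power2_eq_square)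
    also have "\<dots> \<le> (D / \<sigma> + 1)\<^sup>2 / 2"
      using \<sigma> L D by (intro divide_right_mono power_mono) auto
    finally have "exp (- ((D / \<sigma> + 1)\<^sup>2 / 2)) \<le> exp (- ((D + L)\<^sup>2 / (2 * \<sigma>\<^sup>2)))"
      by simp
    then have "L / \<sigma> * exp (- ((D / \<sigma> + 1)\<^sup>2 / 2)) / sqrt (2 * pi)
        \<le> L / \<sigma> * exp (- ((D + L)\<^sup>2 / (2 * \<sigma>\<^sup>2))) / sqrt (2 * pi)"
      using \<sigma> L by (intro divide_right_mono mult_left_mono) auto
    moreover have "min (w / \<sigma>) 1 = L / \<sigma>"
      using \<sigma> w by (auto simp: L_def min_def field_simps)
    ultimately show ?thesis
      unfolding m_def by (simp add: field_simps)
  qed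
  then have "ennreal (min (w / \<sigma>) 1 * exp (- ((D / \<sigma> + 1)\<^sup>2 / 2)) / sqrt (2 * pi))
      \<le> (\<integral>\<^sup>+ y. ennreal m * indicator {u..u + L} y \<partial>lborel)"
    using L m by (simp add: nn_integral_cmult_indicator ennreal_mult[symmetric])
  also have "\<dots> \<le> (\<integral>\<^sup>+ y. ennreal (normal_density \<mu> \<sigma> y) * indicator {c - w..c + w} y \<partial>lborel)"
    using u density_ge by (intro nn_integral_mono) (auto simp: ennreal_leI indicator_def)
  finally show ?thesis .
qed

section \<open>The bridge density as a Markov chain\<close>

fun path_kernel :: "real \<Rightarrow> real \<Rightarrow> real list \<Rightarrow> (real \<Rightarrow> real) \<Rightarrow> real" where
  "path_kernel s u [] y = 1"
| "path_kernel s u (p # ps) y = heat_kernel (p - s) (y p - u) * path_kernel p (y p) ps y"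

definition bridge_kernel :: "real \<Rightarrow> real \<Rightarrow> real \<Rightarrow> real \<Rightarrow> real list \<Rightarrow> (real \<Rightarrow> real) \<Rightarrow> real" where
  "bridge_kernel l r a b ps y =
     path_kernel l a ps y * heat_kernel (r - last (l # ps)) (b - last (a # map y ps))"

text \<open>Mean and standard deviation at time \<open>p\<close> of a Brownian bridge from \<open>u\<close> at time \<open>t\<close>
  to \<open>b\<close> at time \<open>r\<close>.\<close>

definition bridge_mean :: "real \<Rightarrow> real \<Rightarrow> real \<Rightarrow> real \<Rightarrow> real \<Rightarrow> real" where
  "bridge_mean t u r b p = u + (p - t) / (r - t) * (b - u)"

definition bridge_sd :: "real \<Rightarrow> real \<Rightarrow> real \<Rightarrow> real" where
  "bridge_sd t r p = sqrt ((p - t) * (r - p) / (r - t))"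

lemma bridge_sd_pos: "t < p \<Longrightarrow> p < r \<Longrightarrow> 0 < bridge_sd t r p"
  by (simp add: bridge_sd_def)

lemma path_kernel_nonneg: "sorted_wrt (<) (s # ps) \<Longrightarrow> 0 \<le> path_kernel s u ps y"
  by (induction ps arbitrary: s u) (auto intro!: mult_nonneg_nonneg heat_kernel_nonneg)

lemma path_kernel_cong: "(\<And>q. q \<in> set ps \<Longrightarrow> y q = y' q) \<Longrightarrow> path_kernel s u ps y = path_kernel s u ps y'"
  by (induction ps arbitrary: s u) auto

lemma path_kernel_snoc:
  "path_kernel s u (ps @ [p]) y = path_kernel s u ps y * heat_kernel (p - last (s # ps)) (y p - last (u # map y ps))"
  by (induction ps arbitrary: s u) auto

lemma bridge_kernel_nonneg: "sorted_wrt (<) (l # ps @ [r]) \<Longrightarrow> 0 \<le> bridge_kernel l r a b ps y"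
  unfolding bridge_kernel_def
  by (intro mult_nonneg_nonneg path_kernel_nonneg heat_kernel_nonneg)
    (auto simp: sorted_wrt_append less_imp_le)

lemma bb_density_eq_bridge_kernel:
  "bb_density l r a b ps y = bridge_kernel l r a b ps y / heat_kernel (r - l) (b - a)"
proof -
  have "(\<Prod>i<length ps + 1. heat_kernel ((l # ps @ [r]) ! (i + 1) - (l # ps @ [r]) ! i)
      ((a # map y ps @ [b]) ! (i + 1) - (a # map y ps @ [b]) ! i)) = bridge_kernel l r a b ps y"
  proof (induction ps arbitrary: l a)
    case (Cons p ps)
    then show ?case
      by (simp only: length_Cons add_Suc prod.lessThan_Suc_shift) (simp add: bridge_kernel_def)
  qed (simp add: bridge_kernel_def)
  then show ?thesis
    unfolding bb_density_def Let_def by simp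
qed

lemma bridge_kernel_snoc:
  assumes t: "last (l # ps) < p" and r: "p < r" and p: "p \<notin> set ps"
  shows "bridge_kernel l r a b (ps @ [p]) (y(p := v)) =
    bridge_kernel l r a b ps y *
    normal_density (bridge_mean (last (l # ps)) (last (a # map y ps)) r b p) (bridge_sd (last (l # ps)) r p) v"
proof -
  define t where "t = last (l # ps)"
  define u where "u = last (a # map y ps)"
  have "path_kernel l a ps (y(p := v)) = path_kernel l a ps y"
    by (rule path_kernel_cong) (use p in auto)
  then have "bridge_kernel l r a b (ps @ [p]) (y(p := v)) =
      path_kernel l a ps y * (heat_kernel (p - t) (v - u) * heat_kernel (r - p) (b - v))"
    using p unfolding bridge_kernel_def t_def u_def by (simp add: path_kernel_snoc)
  also have "heat_kernel (p - t) (v - u) * heat_kernel (r - p) (b - v) =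
      heat_kernel (r - t) (b - u) * normal_density (bridge_mean t u r b p) (bridge_sd t r p) v"
    using heat_kernel_bridge[of "p - t" "r - p" v u b] t r
    by (simp add: t_def bridge_mean_def bridge_sd_def)
  finally show ?thesis
    unfolding bridge_kernel_def t_def u_def by (simp only: mult.assoc)
qed

section \<open>Integrating out one observation at a time\<close>

lemma sorted_list_of_set_insert_greatest:
  fixes A :: "'a::linorder set"
  assumes "finite A" "\<And>q. q \<in> A \<Longrightarrow> q < p"
  shows "sorted_list_of_set (insert p A) = sorted_list_of_set A @ [p]"
proof -
  have "p \<notin> A" using assms(2) by blast
  then show ?thesis
    using assms by (simp add: sorted_list_of_set_insert sorted_insort_is_snoc less_imp_le)
qed

lemma last_Cons_sorted_list_of_set:
  fixes A :: "'a::linorder set"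
  assumes "finite A" "\<And>q. q \<in> A \<Longrightarrow> l < q"
  shows "last (l # sorted_list_of_set A) = Max (insert l A)"
proof (cases "A = {}")
  case False
  have "sorted_list_of_set A = sorted_list_of_set (A - {Max A}) @ [Max A]"
    using sorted_list_of_set_insert_greatest[of "A - {Max A}" "Max A"] assms False
    by (simp add: insert_absorb less_le)
  then show ?thesis
    using assms False by (simp add: max_def less_imp_le)
qed simp

definition curve_times :: "(nat \<times> real) set \<Rightarrow> nat \<Rightarrow> real set" where
  "curve_times Q j = {p. (j, p) \<in> Q}"

definition curve_kernel ::
  "real \<Rightarrow> real \<Rightarrow> (nat \<Rightarrow> real) \<Rightarrow> (nat \<Rightarrow> real) \<Rightarrow> (nat \<times> real) set \<Rightarrow> nat \<Rightarrow> (nat \<times> real \<Rightarrow> real) \<Rightarrow> real"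
where
  "curve_kernel l r a b Q j x =
     bridge_kernel l r (a j) (b j) (sorted_list_of_set (curve_times Q j)) (\<lambda>p. x (j, p))"

lemma finite_curve_times: "finite Q \<Longrightarrow> finite (curve_times Q j)"
  by (rule finite_subset[OF _ finite_imageI[of Q snd]]) (force simp: curve_times_def)+

lemma curve_kernel_nonneg:
  assumes "finite Q" "Q \<subseteq> UNIV \<times> {l<..<r}" "l < r"
  shows "0 \<le> curve_kernel l r a b Q j x"
proof -
  have "curve_times Q j \<subseteq> {l<..<r}"
    using assms(2) by (auto simp: curve_times_def)
  then have "sorted_wrt (<) (l # sorted_list_of_set (curve_times Q j) @ [r])"
    using finite_curve_times[OF assms(1)] assms(3) by (auto simp: sorted_wrt_append)
  then show ?thesis
    unfolding curve_kernel_def by (rule bridge_kernel_nonneg)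
qed

lemma borel_measurable_path_kernel:
  assumes "\<And>q. q \<in> set ps \<Longrightarrow> (\<lambda>x. Y x q) \<in> borel_measurable M" and "U \<in> borel_measurable M"
  shows "(\<lambda>x. path_kernel s (U x) ps (Y x)) \<in> borel_measurable M"
  using assms
proof (induction ps arbitrary: s U)
  case (Cons p ps)
  have [measurable]: "(\<lambda>x. Y x p) \<in> borel_measurable M" "U \<in> borel_measurable M"
    using Cons.prems by auto
  have [measurable]: "(\<lambda>x. path_kernel p (Y x p) ps (Y x)) \<in> borel_measurable M"
    using Cons by simp
  show ?case
    unfolding path_kernel.simps heat_kernel_def by measurable
qed simp

lemma borel_measurable_curve_kernel [measurable]:
  "(\<lambda>x. curve_kernel l r a b Q j x) \<in> borel_measurable (PiM Q (\<lambda>_. lborel))"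
proof -
  let ?ps = "sorted_list_of_set (curve_times Q j)"
  have coord [measurable]: "(\<lambda>x. x (j, q)) \<in> borel_measurable (PiM Q (\<lambda>_. lborel))" if "q \<in> set ?ps" for q
    using that by (cases "finite (curve_times Q j)") (auto simp: curve_times_def measurable_lborel2)
  have [measurable]: "(\<lambda>x. path_kernel l (a j) ?ps (\<lambda>p. x (j, p))) \<in> borel_measurable (PiM Q (\<lambda>_. lborel))"
    by (rule borel_measurable_path_kernel) (auto intro: coord)
  have [measurable]: "(\<lambda>x. last (a j # map (\<lambda>p. x (j, p)) ?ps)) \<in> borel_measurable (PiM Q (\<lambda>_. lborel))"
    by (cases "?ps = []") (auto simp: last_map intro: coord)
  show ?thesis
    unfolding curve_kernel_def bridge_kernel_def heat_kernel_def by measurable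
qed

lemma curve_kernel_upd_other:
  "j \<noteq> j0 \<Longrightarrow> curve_kernel l r a b Q j (x((j0, p0) := y)) = curve_kernel l r a b (Q - {(j0, p0)}) j x"
proof -
  assume j: "j \<noteq> j0"
  then have "curve_times (Q - {(j0, p0)}) j = curve_times Q j" "(\<lambda>q. (x((j0, p0) := y)) (j, q)) = (\<lambda>q. x (j, q))"
    by (auto simp: curve_times_def)
  then show ?thesis
    by (simp add: curve_kernel_def)
qed

text \<open>Markov property: given the other observations, the last observation \<open>p0\<close> of curve \<open>j0\<close> is
  Gaussian with the bridge mean and deviation from its previous observation (the boundary
  value \<open>a j0\<close> at \<open>l\<close> if there is none) to \<open>b j0\<close> at \<open>r\<close>.\<close>

lemma curve_kernel_upd_top:
  assumes Q: "finite Q" "Q \<subseteq> UNIV \<times> {l<..<r}"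
    and top: "(j0, p0) \<in> Q" "\<And>q. q \<in> curve_times Q j0 \<Longrightarrow> q \<le> p0"
  defines "Q' \<equiv> Q - {(j0, p0)}"
  defines "t \<equiv> Max (insert l (curve_times Q' j0))"
  shows "curve_kernel l r a b Q j0 (x((j0, p0) := y)) = curve_kernel l r a b Q' j0 x *
    normal_density (bridge_mean t (if t = l then a j0 else x (j0, t)) r (b j0) p0) (bridge_sd t r p0) y"
proof -
  have p0: "l < p0" "p0 < r"
    using top(1) Q(2) by auto
  have times: "curve_times Q j0 = insert p0 (curve_times Q' j0)"
    using top(1) by (auto simp: curve_times_def Q'_def)
  have before: "l < q \<and> q < p0" if "q \<in> curve_times Q' j0" for q
    using that Q(2) top(2)[of q] by (force simp: curve_times_def Q'_def)
  have fin: "finite (curve_times Q' j0)"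
    using Q(1) by (simp add: Q'_def finite_curve_times)
  define ts where "ts = sorted_list_of_set (curve_times Q' j0)"
  have ts_snoc: "sorted_list_of_set (curve_times Q j0) = ts @ [p0]"
    unfolding times ts_def by (rule sorted_list_of_set_insert_greatest) (use fin before in auto)
  have last_ts: "last (l # ts) = t"
    unfolding ts_def t_def by (rule last_Cons_sorted_list_of_set) (use fin before in auto)
  have last_value: "last (a j0 # map (\<lambda>q. x (j0, q)) ts) = (if t = l then a j0 else x (j0, t))"
  proof (cases "ts = []")
    case False
    then have "t \<in> set ts"
      using last_ts by (metis last_ConsR last_in_set)
    then have "t \<in> curve_times Q' j0"
      using fin by (simp add: ts_def)
    then show ?thesis
      using False last_ts before by (auto simp: last_map)
  qed (use last_ts in simp)
  have "(\<lambda>q. (x((j0, p0) := y)) (j0, q)) = (\<lambda>q. x (j0, q))(p0 := y)"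
    by auto
  moreover have "p0 \<notin> set ts" "t < p0"
    using fin before p0 by (auto simp: ts_def t_def)
  ultimately show ?thesis
    using bridge_kernel_snoc[of l ts p0 r] last_ts last_value p0
    by (simp add: curve_kernel_def ts_snoc ts_def[symmetric])
qed

lemma nn_integral_curve_kernels_peel:
  fixes h :: "nat \<times> real \<Rightarrow> real \<Rightarrow> ennreal"
  assumes K: "finite K" and Q: "finite Q" "Q \<subseteq> K \<times> {l<..<r}"
    and top: "(j0, p0) \<in> Q" "\<And>q. q \<in> curve_times Q j0 \<Longrightarrow> q \<le> p0"
    and h [measurable]: "\<And>i. h i \<in> borel_measurable borel"
  defines "Q' \<equiv> Q - {(j0, p0)}"
  defines "t \<equiv> Max (insert l (curve_times Q' j0))"
  shows "(\<integral>\<^sup>+x. (\<Prod>j\<in>K. ennreal (curve_kernel l r a b Q j x)) * (\<Prod>i\<in>Q. h i (x i)) \<partial>PiM Q (\<lambda>_. lborel)) =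
    (\<integral>\<^sup>+x. (\<Prod>j\<in>K. ennreal (curve_kernel l r a b Q' j x)) * (\<Prod>i\<in>Q'. h i (x i)) *
      (\<integral>\<^sup>+y. ennreal (normal_density (bridge_mean t (if t = l then a j0 else x (j0, t)) r (b j0) p0)
        (bridge_sd t r p0) y) * h (j0, p0) y \<partial>lborel) \<partial>PiM Q' (\<lambda>_. lborel))"
proof -
  interpret product_sigma_finite "\<lambda>_::nat \<times> real. lborel" by standard
  define \<nu> where "\<nu> x y = normal_density (bridge_mean t (if t = l then a j0 else x (j0, t)) r (b j0) p0)
      (bridge_sd t r p0) y" for x y
  have Q_eq: "Q = insert (j0, p0) Q'" and new: "(j0, p0) \<notin> Q'" and Q': "finite Q'"
    using top(1) Q(1) by (auto simp: Q'_def)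
  have j0: "j0 \<in> K" and "Q \<subseteq> UNIV \<times> {l<..<r}"
    using top(1) Q(2) by auto
  note upd_top = curve_kernel_upd_top[OF Q(1) this(2) top, folded Q'_def t_def]
  have "ennreal (curve_kernel l r a b Q j (x((j0, p0) := y))) =
      ennreal (curve_kernel l r a b Q' j x) * (if j = j0 then ennreal (\<nu> x y) else 1)" for j x y
    using upd_top curve_kernel_upd_other[of j j0] by (auto simp: Q'_def \<nu>_def ennreal_mult'')
  moreover have "(\<Prod>i\<in>Q. h i ((x((j0, p0) := y)) i)) = h (j0, p0) y * (\<Prod>i\<in>Q'. h i (x i))" for x y
  proof -
    have "(\<Prod>i\<in>Q'. h i ((x((j0, p0) := y)) i)) = (\<Prod>i\<in>Q'. h i (x i))"
      using new by (intro prod.cong) auto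
    then show ?thesis
      unfolding Q_eq using Q' new by simp
  qed
  ultimately have integrand: "(\<Prod>j\<in>K. ennreal (curve_kernel l r a b Q j (x((j0, p0) := y)))) *
      (\<Prod>i\<in>Q. h i ((x((j0, p0) := y)) i)) =
    ((\<Prod>j\<in>K. ennreal (curve_kernel l r a b Q' j x)) * (\<Prod>i\<in>Q'. h i (x i))) * (ennreal (\<nu> x y) * h (j0, p0) y)"
    for x y
    by (simp only: prod.distrib) (simp add: K j0 ac_simps)
  have "(\<lambda>x. (\<Prod>j\<in>K. ennreal (curve_kernel l r a b Q j x)) * (\<Prod>i\<in>Q. h i (x i)))
      \<in> borel_measurable (PiM Q (\<lambda>_. lborel))"
    by measurable
  from product_nn_integral_insert[OF Q' new, unfolded Q_eq[symmetric], OF this]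
  show ?thesis
    unfolding integrand \<nu>_def by (simp add: nn_integral_cmult)
qed

lemma obtain_curve_top:
  assumes "finite Q" "Q \<noteq> {}"
  obtains j0 p0 where "(j0, p0) \<in> Q" "\<And>q. q \<in> curve_times Q j0 \<Longrightarrow> q \<le> p0"
proof -
  obtain j0 p where "(j0, p) \<in> Q" using assms(2) by auto
  then have "curve_times Q j0 \<noteq> {}" by (auto simp: curve_times_def)
  moreover have "finite (curve_times Q j0)"
    using assms(1) by (rule finite_curve_times)
  ultimately have "Max (curve_times Q j0) \<in> curve_times Q j0" "\<And>q. q \<in> curve_times Q j0 \<Longrightarrow> q \<le> Max (curve_times Q j0)"
    by auto
  then show ?thesis
    using that by (simp add: curve_times_def)
qed

lemma nn_integral_curve_kernels:
  assumes K: "finite K" and Q: "finite Q" "Q \<subseteq> K \<times> {l<..<r}"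
  shows "(\<integral>\<^sup>+x. (\<Prod>j\<in>K. ennreal (curve_kernel l r a b Q j x)) \<partial>PiM Q (\<lambda>_. lborel)) =
    (\<Prod>j\<in>K. ennreal (heat_kernel (r - l) (b j - a j)))"
  using Q
proof (induction Q rule: finite_remove_induct)
  case empty
  then show ?case
    by (simp add: curve_kernel_def curve_times_def bridge_kernel_def PiM_empty nn_integral_count_space_finite)
next
  case (remove Q)
  obtain j0 p0 where top: "(j0, p0) \<in> Q" "\<And>q. q \<in> curve_times Q j0 \<Longrightarrow> q \<le> p0"
    using obtain_curve_top[OF remove(1,2)] by blast
  define t where "t = Max (insert l (curve_times (Q - {(j0, p0)}) j0))"
  have "l < p0" "p0 < r" "finite (curve_times (Q - {(j0, p0)}) j0)"
    using top(1) remove(1,5) by (auto intro: finite_curve_times)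
  moreover have "q < p0" if "q \<in> curve_times (Q - {(j0, p0)}) j0" for q
    using that top(2)[of q] by (force simp: curve_times_def)
  ultimately have sd: "0 < bridge_sd t r p0"
    by (intro bridge_sd_pos) (auto simp: t_def)
  have "(\<integral>\<^sup>+x. (\<Prod>j\<in>K. ennreal (curve_kernel l r a b Q j x)) \<partial>PiM Q (\<lambda>_. lborel)) =
      (\<integral>\<^sup>+x. (\<Prod>j\<in>K. ennreal (curve_kernel l r a b (Q - {(j0, p0)}) j x)) \<partial>PiM (Q - {(j0, p0)}) (\<lambda>_. lborel))"
    using nn_integral_curve_kernels_peel[where h = "\<lambda>_ _. 1", OF K remove(1,5) top]
    by (simp add: t_def[symmetric] nn_integral_eq_integral integrable_normal_density sd)
  also have "\<dots> = (\<Prod>j\<in>K. ennreal (heat_kernel (r - l) (b j - a j)))"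
    using remove by (intro remove(4)[OF top(1)]) auto
  finally show ?case .
qed

definition prev_time :: "real set \<Rightarrow> real \<Rightarrow> real \<Rightarrow> real" where
  "prev_time P l p = Max (insert l {q \<in> P. q < p})"

lemma prev_time_bounds:
  assumes "finite P" "p \<in> P" "P \<subseteq> {l<..}"
  shows "l \<le> prev_time P l p" "prev_time P l p < p"
  using assms by (auto simp: prev_time_def)

text \<open>Along each curve, \<open>Q\<close> is an initial segment of \<open>P\<close>; so within \<open>Q\<close> the observation
  preceding time \<open>p\<close> is at \<open>prev_time P l p\<close>.\<close>

definition down_closed :: "real set \<Rightarrow> (nat \<times> real) set \<Rightarrow> bool" where
  "down_closed P Q \<longleftrightarrow> (\<forall>(j, p) \<in> Q. \<forall>q \<in> P. q < p \<longrightarrow> (j, q) \<in> Q)"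

lemma down_closed_remove_top:
  assumes Q: "down_closed P Q" "Q \<subseteq> UNIV \<times> P"
    and top: "(j0, p0) \<in> Q" "\<And>q. q \<in> curve_times Q j0 \<Longrightarrow> q \<le> p0"
  shows "down_closed P (Q - {(j0, p0)})" and "curve_times (Q - {(j0, p0)}) j0 = {q \<in> P. q < p0}"
proof -
  show "down_closed P (Q - {(j0, p0)})"
    using Q(1) top(2) by (fastforce simp: down_closed_def curve_times_def)
  show "curve_times (Q - {(j0, p0)}) j0 = {q \<in> P. q < p0}"
    using Q top by (force simp: curve_times_def down_closed_def)
qed

lemma nn_integral_mult_ge:
  fixes G I :: "'a \<Rightarrow> ennreal"
  assumes G: "G \<in> borel_measurable M" and I: "\<And>x. G x \<noteq> 0 \<Longrightarrow> c \<le> I x"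
  shows "(\<integral>\<^sup>+x. G x \<partial>M) * c \<le> (\<integral>\<^sup>+x. G x * I x \<partial>M)"
proof -
  have "(\<integral>\<^sup>+x. G x \<partial>M) * c = (\<integral>\<^sup>+x. G x * c \<partial>M)"
    using G by (rule nn_integral_multc[symmetric])
  also have "\<dots> \<le> (\<integral>\<^sup>+x. G x * I x \<partial>M)"
    using I by (intro nn_integral_mono) (metis mult_left_mono mult_zero_left order_refl zero_le)
  finally show ?thesis .
qed

lemma nn_integral_curve_kernels_ge:
  fixes A :: "nat \<Rightarrow> real \<Rightarrow> real set" and \<rho> :: "real \<Rightarrow> real"
  assumes K: "finite K" and P: "finite P" "P \<subseteq> {l<..<r}"
    and A [measurable]: "\<And>j p. A j p \<in> sets borel"
    and start: "\<And>j. j \<in> K \<Longrightarrow> a j \<in> A j l"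
    and step: "\<And>j p v. j \<in> K \<Longrightarrow> p \<in> P \<Longrightarrow> v \<in> A j (prev_time P l p) \<Longrightarrow>
      ennreal (\<rho> p) \<le> (\<integral>\<^sup>+y. ennreal (normal_density (bridge_mean (prev_time P l p) v r (b j) p)
        (bridge_sd (prev_time P l p) r p) y) * indicator (A j p) y \<partial>lborel)"
    and Q: "Q \<subseteq> K \<times> P" "down_closed P Q"
  shows "(\<Prod>j\<in>K. ennreal (heat_kernel (r - l) (b j - a j))) * (\<Prod>i\<in>Q. ennreal (\<rho> (snd i))) \<le>
    (\<integral>\<^sup>+x. (\<Prod>j\<in>K. ennreal (curve_kernel l r a b Q j x)) * (\<Prod>i\<in>Q. indicator (A (fst i) (snd i)) (x i))
      \<partial>PiM Q (\<lambda>_. lborel))"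
  using finite_subset[OF Q(1) finite_cartesian_product[OF K P(1)]] Q
proof (induction Q rule: finite_remove_induct)
  case empty
  then show ?case
    by (simp add: curve_kernel_def curve_times_def bridge_kernel_def PiM_empty nn_integral_count_space_finite)
next
  case (remove Q)
  obtain j0 p0 where top: "(j0, p0) \<in> Q" "\<And>q. q \<in> curve_times Q j0 \<Longrightarrow> q \<le> p0"
    using obtain_curve_top[OF remove(1,2)] by blast
  define Q' where "Q' = Q - {(j0, p0)}"
  define t where "t = prev_time P l p0"
  have j0: "j0 \<in> K" and p0: "p0 \<in> P" using top(1) remove(5) by auto
  have Q_eq: "Q = insert (j0, p0) Q'" and new: "(j0, p0) \<notin> Q'" and Q': "finite Q'"
    using top(1) remove(1) by (auto simp: Q'_def)
  have "Q \<subseteq> UNIV \<times> P"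
    using remove(5) by auto
  note down_closed' = down_closed_remove_top[OF remove(6) this top, folded Q'_def]
  have t_eq: "Max (insert l (curve_times Q' j0)) = t"
    by (simp add: down_closed'(2) t_def prev_time_def)
  define G where "G x = (\<Prod>j\<in>K. ennreal (curve_kernel l r a b Q' j x)) *
      (\<Prod>i\<in>Q'. indicator (A (fst i) (snd i)) (x i) :: ennreal)" for x
  have "Q \<subseteq> K \<times> {l<..<r}"
    using remove(5) P(2) by auto
  note peel = nn_integral_curve_kernels_peel[OF K remove(1) this top borel_measurable_indicator[OF A],
      folded Q'_def, unfolded t_eq]
  have G [measurable]: "G \<in> borel_measurable (PiM Q' (\<lambda>_. lborel))"
    unfolding G_def by measurable
  have window: "ennreal (\<rho> p0) \<le> (\<integral>\<^sup>+y. ennreal (normal_density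
      (bridge_mean t (if t = l then a j0 else x (j0, t)) r (b j0) p0) (bridge_sd t r p0) y) * indicator (A j0 p0) y \<partial>lborel)"
    if "G x \<noteq> 0" for x
  proof -
    have "(if t = l then a j0 else x (j0, t)) \<in> A j0 t"
    proof (cases "t = l")
      case False
      then have "t \<in> curve_times Q' j0"
        using Max_in[of "insert l (curve_times Q' j0)"] finite_curve_times[OF Q'] t_eq by auto
      then have "(j0, t) \<in> Q'"
        by (simp add: curve_times_def)
      moreover have "(\<Prod>i\<in>Q'. indicator (A (fst i) (snd i)) (x i) :: ennreal) \<noteq> 0"
        using that by (auto simp: G_def)
      ultimately have "indicator (A j0 t) (x (j0, t)) \<noteq> (0 :: ennreal)"
        using Q' by (metis fst_conv snd_conv prod_zero)
      then show ?thesis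
        using False by (simp split: split_indicator_asm)
    qed (simp add: start j0)
    then show ?thesis
      using step[OF j0 p0] by (simp add: t_def)
  qed
  have "(\<Prod>j\<in>K. ennreal (heat_kernel (r - l) (b j - a j))) * (\<Prod>i\<in>Q. ennreal (\<rho> (snd i))) =
      (\<Prod>j\<in>K. ennreal (heat_kernel (r - l) (b j - a j))) * (\<Prod>i\<in>Q'. ennreal (\<rho> (snd i))) * ennreal (\<rho> p0)"
    unfolding Q_eq using Q' new by (simp add: ac_simps)
  also have "\<dots> \<le> (\<integral>\<^sup>+x. G x \<partial>PiM Q' (\<lambda>_. lborel)) * ennreal (\<rho> p0)"
    using remove(4)[OF top(1)] remove(5) down_closed'(1) unfolding G_def Q'_def
    by (intro mult_right_mono) auto
  also have "\<dots> \<le> (\<integral>\<^sup>+x. G x * (\<integral>\<^sup>+y. ennreal (normal_density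
      (bridge_mean t (if t = l then a j0 else x (j0, t)) r (b j0) p0) (bridge_sd t r p0) y) * indicator (A j0 p0) y \<partial>lborel)
      \<partial>PiM Q' (\<lambda>_. lborel))"
    using G window by (rule nn_integral_mult_ge)
  also have "\<dots> = (\<integral>\<^sup>+x. (\<Prod>j\<in>K. ennreal (curve_kernel l r a b Q j x)) * (\<Prod>i\<in>Q. indicator (A (fst i) (snd i)) (x i))
      \<partial>PiM Q (\<lambda>_. lborel))"
    unfolding G_def using peel by simp
  finally show ?case .
qed

section \<open>The free measure\<close>

lemma bb_density_eq_curve_kernel:
  "j \<in> K \<Longrightarrow> bb_density l r (a j) (b j) (sorted_list_of_set P) (\<lambda>p. x (j, p)) =
    curve_kernel l r a b (K \<times> P) j x / heat_kernel (r - l) (b j - a j)"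
  by (simp add: curve_kernel_def curve_times_def bb_density_eq_bridge_kernel)

lemma emeasure_free_fdd_mult:
  assumes P: "finite P" "P \<subseteq> {l<..<r}" and lr: "l < r"
    and E [measurable]: "E \<in> sets (PiM ({1..k} \<times> P) (\<lambda>_. lborel))"
  shows "emeasure (free_fdd k l r am ap P) E * (\<Prod>j\<in>{1..k}. ennreal (heat_kernel (r - l) (ap j - am j))) =
    (\<integral>\<^sup>+x. (\<Prod>j\<in>{1..k}. ennreal (curve_kernel l r am ap ({1..k} \<times> P) j x)) * indicator E x
      \<partial>PiM ({1..k} \<times> P) (\<lambda>_. lborel))"
proof -
  let ?M = "PiM ({1..k} \<times> P) (\<lambda>_. lborel)"
  let ?c = "\<lambda>x. \<Prod>j\<in>{1..k}. curve_kernel l r am ap ({1..k} \<times> P) j x"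
  let ?Z = "\<Prod>j\<in>{1..k}. heat_kernel (r - l) (ap j - am j)"
  have Z: "0 < ?Z"
    using lr by (simp add: heat_kernel_pos prod_pos)
  have c: "0 \<le> curve_kernel l r am ap ({1..k} \<times> P) j x" for j x
    using P lr by (intro curve_kernel_nonneg) auto
  have "(\<Prod>j\<in>{1..k}. bb_density l r (am j) (ap j) (sorted_list_of_set P) (\<lambda>p. x (j, p))) = ?c x / ?Z" for x
    by (auto simp: prod_dividef[symmetric] bb_density_eq_curve_kernel intro!: prod.cong)
  then have emeasure_eq: "emeasure (free_fdd k l r am ap P) E = (\<integral>\<^sup>+x. ennreal (?c x / ?Z) * indicator E x \<partial>?M)"
    unfolding free_fdd_def
    by (simp only:) (rule emeasure_density[OF _ E], measurable)
  have "emeasure (free_fdd k l r am ap P) E * ennreal ?Z =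
      (\<integral>\<^sup>+x. ennreal (?c x / ?Z) * indicator E x * ennreal ?Z \<partial>?M)"
    unfolding emeasure_eq
    by (rule nn_integral_multc[symmetric]) measurable
  also have "\<dots> = (\<integral>\<^sup>+x. ennreal (?c x) * indicator E x \<partial>?M)"
  proof (rule nn_integral_cong)
    fix x
    have "ennreal (u / v) * ennreal v = ennreal u" if "0 \<le> u" "0 < v" for u v :: real
      using that by (simp add: ennreal_mult[symmetric])
    then have "ennreal (?c x / ?Z) * ennreal ?Z = ennreal (?c x)"
      using Z c by (simp add: prod_nonneg)
    then show "ennreal (?c x / ?Z) * indicator E x * ennreal ?Z = ennreal (?c x) * indicator E x"
      by (simp only: ac_simps)
  qed
  finally show ?thesis
    using Z c by (simp add: prod_ennreal heat_kernel_pos prod_nonneg lr less_imp_le)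
qed

lemma prob_space_free_fdd:
  assumes "finite P" "P \<subseteq> {l<..<r}" "l < r"
  shows "prob_space (free_fdd k l r am ap P)"
proof
  let ?M = "PiM ({1..k} \<times> P) (\<lambda>_. lborel)"
  let ?Z = "\<Prod>j\<in>{1..k}. ennreal (heat_kernel (r - l) (ap j - am j))"
  have "emeasure (free_fdd k l r am ap P) (space ?M) * ?Z =
      (\<integral>\<^sup>+x. (\<Prod>j\<in>{1..k}. ennreal (curve_kernel l r am ap ({1..k} \<times> P) j x)) * indicator (space ?M) x \<partial>?M)"
    by (rule emeasure_free_fdd_mult[OF assms sets.top])
  also have "\<dots> = (\<integral>\<^sup>+x. (\<Prod>j\<in>{1..k}. ennreal (curve_kernel l r am ap ({1..k} \<times> P) j x)) \<partial>?M)"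
    by (rule nn_integral_cong) simp
  also have "\<dots> = ?Z"
    using assms by (intro nn_integral_curve_kernels) auto
  finally have "?Z * emeasure (free_fdd k l r am ap P) (space ?M) = ?Z * 1"
    by (simp add: ac_simps)
  moreover have "?Z \<noteq> 0" "?Z \<noteq> \<top>"
    using assms(3) heat_kernel_pos[of "r - l"] by (auto simp: ennreal_prod_eq_top ennreal_eq_0_iff not_le)
  ultimately have "emeasure (free_fdd k l r am ap P) (space ?M) = 1"
    using ennreal_mult_cancel_left[of ?Z _ 1] by blast
  then show "emeasure (free_fdd k l r am ap P) (space (free_fdd k l r am ap P)) = 1"
    by (simp add: free_fdd_def)
qed

lemma emeasure_free_fdd_ge:
  fixes A :: "nat \<Rightarrow> real \<Rightarrow> real set" and \<rho> :: "real \<Rightarrow> real"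
  assumes P: "finite P" "P \<subseteq> {l<..<r}" and lr: "l < r"
    and A: "\<And>j p. A j p \<in> sets borel"
    and start: "\<And>j. j \<in> {1..k} \<Longrightarrow> am j \<in> A j l"
    and step: "\<And>j p v. j \<in> {1..k} \<Longrightarrow> p \<in> P \<Longrightarrow> v \<in> A j (prev_time P l p) \<Longrightarrow>
      ennreal (\<rho> p) \<le> (\<integral>\<^sup>+y. ennreal (normal_density (bridge_mean (prev_time P l p) v r (ap j) p)
        (bridge_sd (prev_time P l p) r p) y) * indicator (A j p) y \<partial>lborel)"
    and E: "E \<in> sets (PiM ({1..k} \<times> P) (\<lambda>_. lborel))"
    and tube: "\<And>x. x \<in> space (PiM ({1..k} \<times> P) (\<lambda>_. lborel)) \<Longrightarrow>
      (\<And>j p. j \<in> {1..k} \<Longrightarrow> p \<in> P \<Longrightarrow> x (j, p) \<in> A j p) \<Longrightarrow> x \<in> E"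
  shows "(\<Prod>p\<in>P. ennreal (\<rho> p)) ^ k \<le> emeasure (free_fdd k l r am ap P) E"
proof -
  let ?M = "PiM ({1..k} \<times> P) (\<lambda>_. lborel)"
  let ?Z = "\<Prod>j\<in>{1..k}. ennreal (heat_kernel (r - l) (ap j - am j))"
  let ?F = "\<lambda>x. \<Prod>j\<in>{1..k}. ennreal (curve_kernel l r am ap ({1..k} \<times> P) j x)"
  have "(\<Prod>i\<in>{1..k} \<times> P. ennreal (\<rho> (snd i))) = (\<Prod>(j, p)\<in>{1..k} \<times> P. ennreal (\<rho> p))"
    by (rule prod.cong) auto
  also have "\<dots> = (\<Prod>p\<in>P. ennreal (\<rho> p)) ^ k"
    by (simp add: prod.cartesian_product[symmetric])
  finally have "?Z * (\<Prod>p\<in>P. ennreal (\<rho> p)) ^ k \<le>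
      (\<integral>\<^sup>+x. ?F x * (\<Prod>i\<in>{1..k} \<times> P. indicator (A (fst i) (snd i)) (x i)) \<partial>?M)"
    using nn_integral_curve_kernels_ge[where K = "{1..k}" and Q = "{1..k} \<times> P", OF _ P A start step]
    by (simp add: down_closed_def)
  also have "\<dots> \<le> (\<integral>\<^sup>+x. ?F x * indicator E x \<partial>?M)"
  proof (intro nn_integral_mono mult_left_mono)
    fix x :: "nat \<times> real \<Rightarrow> real" assume x: "x \<in> space ?M"
    show "(\<Prod>i\<in>{1..k} \<times> P. indicator (A (fst i) (snd i)) (x i)) \<le> (indicator E x :: ennreal)"
    proof (cases "\<forall>j\<in>{1..k}. \<forall>p\<in>P. x (j, p) \<in> A j p")
      case True
      then have "(\<Prod>i\<in>{1..k} \<times> P. indicator (A (fst i) (snd i)) (x i)) = (1 :: ennreal)"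
        by (intro prod.neutral) auto
      moreover have "x \<in> E"
        using tube[OF x] True by blast
      ultimately show ?thesis
        by simp
    next
      case False
      then obtain j p where "j \<in> {1..k}" "p \<in> P" "x (j, p) \<notin> A j p"
        by blast
      then have "(\<Prod>i\<in>{1..k} \<times> P. indicator (A (fst i) (snd i)) (x i)) = (0 :: ennreal)"
        using P(1) by (intro prod_zero bexI[of _ "(j, p)"]) auto
      then show ?thesis
        by (metis zero_le)
    qed
  qed simp
  also have "\<dots> = ?Z * emeasure (free_fdd k l r am ap P) E"
    using emeasure_free_fdd_mult[OF P lr E] by (simp add: mult.commute)
  finally show ?thesis
    using lr heat_kernel_pos[of "r - l"]
    by (simp add: ennreal_mult_le_mult_iff ennreal_prod_eq_top ennreal_eq_0_iff not_le)
qed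

lemma sets_W_event: "finite P \<Longrightarrow> W_event k P g \<in> sets (PiM ({1..k} \<times> P) (\<lambda>_. lborel))"
  unfolding W_event_def by measurable

lemma sets_H_event:
  assumes "1 \<le> k" "finite P"
  shows "H_event k P g \<mu> lam0 lam1 T \<in> sets (PiM ({1..k} \<times> P) (\<lambda>_. lborel))"
  unfolding H_event_def using assms(2) by measurable (use assms(1) in simp_all)

lemma measure_le_PL_H:
  assumes "1 \<le> k" "finite P" "P \<subseteq> {l<..<r}" "l < r"
  shows "measure (free_fdd k l r am ap P) (W_event k P g \<inter> H_event k P g \<mu> lam0 lam1 T) \<le>
    PL_H k l r am ap P g \<mu> lam0 lam1 T"
proof -
  interpret prob_space "free_fdd k l r am ap P"
    using assms(2-4) by (rule prob_space_free_fdd)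
  let ?W = "W_event k P g" and ?H = "H_event k P g \<mu> lam0 lam1 T"
  have "?W \<in> events"
    using sets_W_event[OF assms(2)] by (simp add: free_fdd_def)
  then have "measure (free_fdd k l r am ap P) (?W \<inter> ?H) \<le> measure (free_fdd k l r am ap P) ?W"
    by (intro finite_measure_mono) auto
  moreover have "measure (free_fdd k l r am ap P) ?W \<le> 1"
    by (rule prob_le_1)
  ultimately show ?thesis
  proof (cases "measure (free_fdd k l r am ap P) ?W = 0")
    case False
    then have "measure (free_fdd k l r am ap P) (?W \<inter> ?H) / 1 \<le>
        measure (free_fdd k l r am ap P) (?W \<inter> ?H) / measure (free_fdd k l r am ap P) ?W"
      using \<open>measure (free_fdd k l r am ap P) ?W \<le> 1\<close> measure_nonneg[of _ ?W]
      by (intro divide_left_mono) (auto simp: less_le)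
    then show ?thesis
      by (simp add: PL_H_def)
  qed (simp add: PL_H_def)
qed

section \<open>One step inside the tube\<close>

text \<open>The chord from \<open>a\<close> to \<open>b\<close> lifted by a tent of slope \<open>K\<close>; the tent dominates every
  \<open>K\<close>-Lipschitz function vanishing at \<open>l\<close> and \<open>r\<close>.\<close>

definition tube_centre :: "real \<Rightarrow> real \<Rightarrow> real \<Rightarrow> real \<Rightarrow> real \<Rightarrow> real \<Rightarrow> real" where
  "tube_centre l r a b K s = a + (s - l) / (r - l) * (b - a) + K * min (s - l) (r - s)"

text \<open>Steps starting right of the midpoint cost nothing: there the tent is affine and vanishes
  at \<open>r\<close>, so the bridge mean follows the centre of the tube exactly.\<close>

definition step_cost :: "real \<Rightarrow> real \<Rightarrow> real \<Rightarrow> real \<Rightarrow> real \<Rightarrow> real" where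
  "step_cost l r K t p = (if t < (l + r) / 2 then 4 * K\<^sup>2 * min (p - t) (r - p) else 0)"

definition step_weight :: "real \<Rightarrow> real \<Rightarrow> real" where
  "step_weight w B = min w 1 * exp (- 1) / (sqrt (2 * pi) * (1 + sqrt B))"

lemma bridge_mean_minus_tube_centre:
  assumes "l < r" "t < r"
  shows "bridge_mean t v r b p - tube_centre l r a b K p =
    (r - p) / (r - t) * (v - tube_centre l r a b K t) +
    ((r - p) / (r - t) * (K * min (t - l) (r - t)) - K * min (p - l) (r - p))"
proof -
  define \<theta> where "\<theta> = (p - t) / (r - t)"
  define m where "m = a + (t - l) / (r - l) * (b - a)"
  have one_minus: "(r - p) / (r - t) = 1 - \<theta>"
    using assms by (simp add: \<theta>_def field_simps)
  have "b - m = (r - t) / (r - l) * (b - a)"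
    using assms by (simp add: m_def field_simps)
  then have "\<theta> * (b - m) = (p - t) / (r - l) * (b - a)"
    using assms by (simp add: \<theta>_def)
  moreover have "(p - l) / (r - l) = (t - l) / (r - l) + (p - t) / (r - l)"
    by (simp add: add_divide_distrib[symmetric])
  ultimately have interp: "a + (p - l) / (r - l) * (b - a) = m + \<theta> * (b - m)"
    by (simp add: m_def distrib_right)
  show ?thesis
    unfolding bridge_mean_def tube_centre_def one_minus interp \<theta>_def[symmetric] m_def[symmetric]
    by (simp add: algebra_simps)
qed

lemma bridge_mean_tube_centre_dist_le:
  assumes t: "l \<le> t" "t < p" and p: "p < r" and v: "\<bar>v - tube_centre l r a b K t\<bar> \<le> w"
  shows "\<bar>bridge_mean t v r b p - tube_centre l r a b K p\<bar> \<le>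
    w + \<bar>(r - p) / (r - t) * (K * min (t - l) (r - t)) - K * min (p - l) (r - p)\<bar>"
proof -
  have q: "0 \<le> (r - p) / (r - t)" "(r - p) / (r - t) \<le> 1"
    using t p by auto
  have "\<bar>(r - p) / (r - t) * (v - tube_centre l r a b K t)\<bar> = (r - p) / (r - t) * \<bar>v - tube_centre l r a b K t\<bar>"
    by (simp only: abs_mult abs_of_nonneg[OF q(1)])
  also have "\<dots> \<le> w"
    using mult_left_le_one_le[OF abs_ge_zero q, of "v - tube_centre l r a b K t"] v by linarith
  finally have first: "\<bar>(r - p) / (r - t) * (v - tube_centre l r a b K t)\<bar> \<le> w" .
  have "bridge_mean t v r b p - tube_centre l r a b K p =
      (r - p) / (r - t) * (v - tube_centre l r a b K t) +
      ((r - p) / (r - t) * (K * min (t - l) (r - t)) - K * min (p - l) (r - p))"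
    using t p by (intro bridge_mean_minus_tube_centre) auto
  then show ?thesis
    by (simp only:) (rule order_trans[OF abs_triangle_ineq add_right_mono[OF first]])
qed

lemma tent_bridge_defect:
  fixes K l r t p :: real
  assumes K: "0 \<le> K" and lt: "l \<le> t" and tp: "t < p" and pr: "p < r"
  defines "D \<equiv> (r - p) / (r - t) * (K * min (t - l) (r - t)) - K * min (p - l) (r - p)"
  shows "\<bar>D\<bar> \<le> 2 * K * ((p - t) * (r - p) / (r - t))"
    and "(l + r) / 2 \<le> t \<Longrightarrow> D = 0"
proof -
  define mt where "mt = min (t - l) (r - t)"
  define mp where "mp = min (p - l) (r - p)"
  have rt: "0 < r - t" using tp pr by simp
  define X where "X = (r - t) * mp - (r - p) * mt"
  have D_eq: "D = - (K * X / (r - t))"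
    using rt by (simp add: D_def X_def mt_def mp_def field_simps)
  have "(r - p) * mt \<le> (r - t) * mp"
  proof (cases "r - p \<le> p - l")
    case True
    then have "mp = r - p" by (simp add: mp_def)
    moreover have "(r - p) * mt \<le> (r - p) * (r - t)"
      using pr by (intro mult_left_mono) (auto simp: mt_def)
    ultimately show ?thesis by (simp add: mult.commute)
  next
    case False
    have "(r - p) * mt \<le> (r - p) * (t - l)"
      using pr by (intro mult_left_mono) (auto simp: mt_def)
    also have "\<dots> \<le> (r - t) * (p - l)"
    proof -
      have "(r - t) * (p - l) - (r - p) * (t - l) = (r - l) * (p - t)"
        by (simp add: algebra_simps)
      moreover have "0 \<le> (r - l) * (p - t)"
        using lt tp pr by simp
      ultimately show ?thesis by linarith
    qed
    finally show ?thesis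
      using False by (simp add: mp_def)
  qed
  moreover have "(r - t) * mp \<le> 2 * ((p - t) * (r - p)) + (r - p) * mt"
  proof -
    have "(r - t) * mp = (p - t) * mp + (r - p) * mp" by (simp add: algebra_simps)
    also have "(p - t) * mp \<le> (p - t) * (r - p)"
      using tp by (intro mult_left_mono) (auto simp: mp_def)
    also have "(r - p) * mp \<le> (r - p) * (mt + (p - t))"
      using pr tp by (intro mult_left_mono) (auto simp: mp_def mt_def min_def)
    finally show ?thesis by (simp add: algebra_simps)
  qed
  ultimately have "0 \<le> X" "X \<le> 2 * ((p - t) * (r - p))"
    by (auto simp: X_def)
  then have "\<bar>D\<bar> \<le> K * (2 * ((p - t) * (r - p))) / (r - t)"
    using K rt by (auto simp: D_eq intro!: divide_right_mono mult_left_mono)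
  then show "\<bar>D\<bar> \<le> 2 * K * ((p - t) * (r - p) / (r - t))"
    by (simp add: algebra_simps)
  show "D = 0" if "(l + r) / 2 \<le> t"
  proof -
    have "min (t - l) (r - t) = r - t" "min (p - l) (r - p) = r - p"
      using that tp by auto
    then show ?thesis
      using rt by (simp add: D_def)
  qed
qed

lemma bridge_sd_sq_le:
  assumes "t < p" "p < r"
  shows "(bridge_sd t r p)\<^sup>2 \<le> p - t" and "(bridge_sd t r p)\<^sup>2 \<le> r - p"
proof -
  have sq: "(bridge_sd t r p)\<^sup>2 = (p - t) * ((r - p) / (r - t))" "(bridge_sd t r p)\<^sup>2 = (r - p) * ((p - t) / (r - t))"
    using assms by (simp_all add: bridge_sd_def)
  show "(bridge_sd t r p)\<^sup>2 \<le> p - t"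
    unfolding sq(1) using assms by (intro mult_left_le) auto
  show "(bridge_sd t r p)\<^sup>2 \<le> r - p"
    unfolding sq(2) using assms by (intro mult_left_le) auto
qed

lemma tent_bridge_defect_sq_le:
  assumes K: "0 \<le> K" and t: "l \<le> t" "t < p" and p: "p < r"
  shows "(\<bar>(r - p) / (r - t) * (K * min (t - l) (r - t)) - K * min (p - l) (r - p)\<bar> / bridge_sd t r p)\<^sup>2
    \<le> step_cost l r K t p"
proof (cases "t < (l + r) / 2")
  case True
  define D where "D = \<bar>(r - p) / (r - t) * (K * min (t - l) (r - t)) - K * min (p - l) (r - p)\<bar>"
  define S where "S = (bridge_sd t r p)\<^sup>2"
  have S: "0 < S" "S \<le> p - t" "S \<le> r - p"
    using bridge_sd_pos[OF t(2) p] bridge_sd_sq_le[OF t(2) p] by (simp_all add: S_def)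
  have "D \<le> 2 * K * S"
    using tent_bridge_defect(1)[OF K t p] t p by (simp add: D_def S_def bridge_sd_def)
  have "(D / bridge_sd t r p)\<^sup>2 = D\<^sup>2 / S"
    by (simp add: S_def power_divide)
  also have "\<dots> \<le> (2 * K * S)\<^sup>2 / S"
    using \<open>D \<le> 2 * K * S\<close> S by (intro divide_right_mono power_mono) (auto simp: D_def)
  also have "\<dots> = 4 * K\<^sup>2 * S"
    using S by (simp add: power2_eq_square)
  also have "\<dots> \<le> 4 * K\<^sup>2 * min (p - t) (r - p)"
    using S by (intro mult_left_mono) auto
  finally show ?thesis
    using True by (simp add: D_def step_cost_def)
next
  case False
  then show ?thesis
    using tent_bridge_defect(2)[OF K t p] by (simp add: step_cost_def)
qed

lemma step_weight_le:
  assumes w: "0 < w" and \<sigma>: "0 < \<sigma>" "\<sigma> \<le> sqrt B" and c: "(D / \<sigma>)\<^sup>2 \<le> c"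
  shows "step_weight w B * exp (- c) \<le> min (w / \<sigma>) 1 * exp (- ((D / \<sigma> + 1)\<^sup>2 / 2)) / sqrt (2 * pi)"
proof -
  have B: "0 \<le> sqrt B" using \<sigma> by linarith
  have "min w 1 / (1 + sqrt B) \<le> min (w / \<sigma>) 1"
  proof (cases "w / \<sigma> \<le> 1")
    case True
    have "min w 1 / (1 + sqrt B) \<le> w / (1 + sqrt B)"
      using B by (intro divide_right_mono) auto
    also have "\<dots> \<le> w / \<sigma>"
      using w \<sigma> by (intro divide_left_mono) auto
    finally show ?thesis using True by simp
  next
    case False
    have "min w 1 / (1 + sqrt B) \<le> 1 / 1"
      using B by (intro frac_le) auto
    then show ?thesis using False by simp
  qed
  moreover have "exp (- 1) * exp (- c) \<le> exp (- ((D / \<sigma> + 1)\<^sup>2 / 2))"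
  proof -
    have "(x + 1)\<^sup>2 \<le> 2 * (x\<^sup>2 + 1)" for x :: real
    proof -
      have "(x + 1)\<^sup>2 = 2 * (x\<^sup>2 + 1) - (x - 1)\<^sup>2"
        by (simp add: power2_eq_square algebra_simps)
      then show ?thesis
        using zero_le_power2[of "x - 1"] by linarith
    qed
    then have "(D / \<sigma> + 1)\<^sup>2 \<le> 2 * ((D / \<sigma>)\<^sup>2 + 1)" .
    then show ?thesis
      using c by (simp add: exp_add[symmetric])
  qed
  ultimately have "min w 1 / (1 + sqrt B) * (exp (- 1) * exp (- c)) / sqrt (2 * pi) \<le>
      min (w / \<sigma>) 1 * exp (- ((D / \<sigma> + 1)\<^sup>2 / 2)) / sqrt (2 * pi)"
    using w B \<sigma> by (intro divide_right_mono mult_mono) auto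
  then show ?thesis
    by (simp add: step_weight_def field_simps)
qed

lemma bridge_tube_mass_ge:
  assumes w: "0 < w" and K: "0 \<le> K" and t: "l \<le> t" "t < p" and p: "p < r" and B: "r - l \<le> B"
    and v: "\<bar>v - tube_centre l r a b K t\<bar> \<le> w"
  shows "ennreal (step_weight w B * exp (- step_cost l r K t p)) \<le>
    (\<integral>\<^sup>+y. ennreal (normal_density (bridge_mean t v r b p) (bridge_sd t r p) y) *
      indicator {tube_centre l r a b K p - w..tube_centre l r a b K p + w} y \<partial>lborel)"
proof -
  define D where "D = \<bar>(r - p) / (r - t) * (K * min (t - l) (r - t)) - K * min (p - l) (r - p)\<bar>"
  have sd: "0 < bridge_sd t r p" "bridge_sd t r p \<le> sqrt B"
    using bridge_sd_pos[OF t(2) p] bridge_sd_sq_le(2)[OF t(2) p] t B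
    by (auto intro!: real_le_rsqrt)
  have "ennreal (step_weight w B * exp (- step_cost l r K t p)) \<le>
      ennreal (min (w / bridge_sd t r p) 1 * exp (- ((D / bridge_sd t r p + 1)\<^sup>2 / 2)) / sqrt (2 * pi))"
    using tent_bridge_defect_sq_le[OF K t p] by (intro ennreal_leI step_weight_le[OF w sd]) (simp add: D_def)
  also have "\<dots> \<le> (\<integral>\<^sup>+y. ennreal (normal_density (bridge_mean t v r b p) (bridge_sd t r p) y) *
      indicator {tube_centre l r a b K p - w..tube_centre l r a b K p + w} y \<partial>lborel)"
    using bridge_mean_tube_centre_dist_le[OF t p v]
    by (intro nn_integral_normal_density_interval_ge[OF sd(1) w]) (simp_all add: D_def)
  finally show ?thesis .
qed

section \<open>The accumulated cost\<close>

lemma sum_prev_time_gaps: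
  fixes A :: "real set"
  assumes "finite A" "A \<subseteq> {l<..}"
  shows "(\<Sum>p\<in>A. p - prev_time A l p) = Max (insert l A) - l"
  using assms
proof (induction A rule: finite_ranking_induct[where f = "\<lambda>x. x"])
  case (insert x A)
  show ?case
  proof (cases "x \<in> A")
    case False
    have below: "y < x" if "y \<in> A" for y
      using that insert(2)[OF that] False by (metis order_le_neq_trans)
    have "(\<Sum>p\<in>insert x A. p - prev_time (insert x A) l p) = (x - Max (insert l A)) + (\<Sum>p\<in>A. p - prev_time A l p)"
    proof -
      have "{q \<in> insert x A. q < x} = A" using below by auto
      moreover have "{q \<in> insert x A. q < p} = {q \<in> A. q < p}" if "p \<in> A" for p
        using that insert(2)[OF that] by auto
      ultimately show ?thesis
        using insert(1) False by (simp add: prev_time_def)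
    qed
    also have "Max (insert l (insert x A)) = x"
      using insert below by (intro Max_eqI) (auto intro: less_imp_le)
    ultimately show ?thesis
      using insert by simp
  qed (use insert in \<open>simp add: insert_absorb\<close>)
qed simp

lemma sum_step_cost_left_le:
  fixes P :: "real set" and \<delta> K :: real
  assumes P: "finite P" "P \<subseteq> ({l<..<l + \<delta>} \<union> {r - \<delta><..<r}) \<inter> {l<..<r}" and \<delta>: "0 \<le> \<delta>"
  shows "(\<Sum>p\<in>{p \<in> P. p \<le> (l + r) / 2}. step_cost l r K (prev_time P l p) p) \<le> 4 * K\<^sup>2 * \<delta>"
proof -
  define A where "A = {p \<in> P. p \<le> (l + r) / 2}"
  have A: "finite A" "A \<subseteq> {l<..}"
    using P by (auto simp: A_def)
  have "step_cost l r K (prev_time P l p) p \<le> 4 * K\<^sup>2 * (p - prev_time A l p)" if "p \<in> A" for p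
  proof -
    have "prev_time P l p = prev_time A l p"
      using that by (auto simp: prev_time_def A_def intro!: arg_cong[where f = Max])
    then show ?thesis
      using prev_time_bounds[OF A(1) that A(2)] by (auto simp: step_cost_def intro!: mult_left_mono)
  qed
  then have "(\<Sum>p\<in>A. step_cost l r K (prev_time P l p) p) \<le> 4 * K\<^sup>2 * (\<Sum>p\<in>A. p - prev_time A l p)"
    by (simp add: sum_distrib_left sum_mono)
  also have "(\<Sum>p\<in>A. p - prev_time A l p) = Max (insert l A) - l"
    using A by (rule sum_prev_time_gaps)
  also have "\<dots> \<le> \<delta>"
  proof -
    have "Max (insert l A) \<in> insert l A"
      using A by (intro Max_in) auto
    moreover have "p - l < \<delta>" if "p \<in> A" for p
      using that P(2) by (auto simp: A_def)
    ultimately show ?thesis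
      using \<delta> by (cases "Max (insert l A) = l") (auto intro: less_imp_le)
  qed
  finally show ?thesis
    by (simp add: A_def mult_left_mono)
qed

lemma sum_step_cost_right_le:
  fixes P :: "real set" and \<delta> K :: real
  assumes P: "finite P" "P \<subseteq> ({l<..<l + \<delta>} \<union> {r - \<delta><..<r}) \<inter> {l<..<r}" and \<delta>: "0 \<le> \<delta>"
  shows "(\<Sum>p\<in>{p \<in> P. (l + r) / 2 < p}. step_cost l r K (prev_time P l p) p) \<le> 4 * K\<^sup>2 * \<delta>"
proof (cases "{p \<in> P. (l + r) / 2 < p} = {}")
  case False
  define B where "B = {p \<in> P. (l + r) / 2 < p}"
  define p0 where "p0 = Min B"
  have B: "finite B" "B \<noteq> {}"
    using P(1) False by (simp_all add: B_def)
  then have p0: "p0 \<in> B" "\<And>q. q \<in> B \<Longrightarrow> p0 \<le> q"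
    by (simp_all add: p0_def)
  have "step_cost l r K (prev_time P l p) p = 0" if "p \<in> B - {p0}" for p
  proof -
    have "p0 \<le> prev_time P l p"
      using that p0 P(1) by (force simp: prev_time_def B_def intro: Max_ge)
    then show ?thesis
      using p0(1) by (simp add: step_cost_def B_def)
  qed
  then have "(\<Sum>p\<in>B. step_cost l r K (prev_time P l p) p) = step_cost l r K (prev_time P l p0) p0"
    using B(1) p0(1) by (simp add: sum.remove)
  also have "\<dots> \<le> 4 * K\<^sup>2 * (r - p0)"
    using p0(1) P(2) by (auto simp: step_cost_def B_def intro!: mult_left_mono)
  also have "\<dots> \<le> 4 * K\<^sup>2 * \<delta>"
    using p0(1) P(2) by (intro mult_left_mono) (auto simp: B_def)
  finally show ?thesis
    by (simp add: B_def)
next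
  case True
  then show ?thesis
    using \<delta> by (simp only: sum.empty) simp
qed

lemma sum_step_cost_le:
  fixes P :: "real set" and \<delta> K :: real
  assumes P: "finite P" "P \<subseteq> ({l<..<l + \<delta>} \<union> {r - \<delta><..<r}) \<inter> {l<..<r}" and \<delta>: "0 \<le> \<delta>"
  shows "(\<Sum>p\<in>P. step_cost l r K (prev_time P l p) p) \<le> 8 * K\<^sup>2 * \<delta>"
proof -
  have "P = {p \<in> P. p \<le> (l + r) / 2} \<union> {p \<in> P. (l + r) / 2 < p}"
    by auto
  then have "(\<Sum>p\<in>P. step_cost l r K (prev_time P l p) p) =
      (\<Sum>p\<in>{p \<in> P. p \<le> (l + r) / 2}. step_cost l r K (prev_time P l p) p) +
      (\<Sum>p\<in>{p \<in> P. (l + r) / 2 < p}. step_cost l r K (prev_time P l p) p)"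
    using P(1) by (subst sum.union_disjoint[symmetric]) auto
  then show ?thesis
    using sum_step_cost_left_le[OF P \<delta>, of K] sum_step_cost_right_le[OF P \<delta>, of K] by simp
qed

lemma step_weight_pos: "0 < w \<Longrightarrow> 0 \<le> B \<Longrightarrow> 0 < step_weight w B"
  by (simp add: step_weight_def add_pos_nonneg)

lemma step_weight_le_1: "0 < w \<Longrightarrow> 0 \<le> B \<Longrightarrow> step_weight w B \<le> 1"
proof -
  assume "0 < w" "0 \<le> B"
  moreover have "1 \<le> sqrt (2 * pi)"
    using pi_gt3 by simp
  ultimately have "min w 1 * exp (- 1) \<le> 1 * 1" "1 * 1 \<le> sqrt (2 * pi) * (1 + sqrt B)"
    by (intro mult_mono; simp)+
  then show ?thesis
    by (simp add: step_weight_def)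
qed

lemma ln_step_weight_ge:
  assumes "0 < w" "0 \<le> B"
  shows "ln (step_weight w 0) - sqrt B \<le> ln (step_weight w B)"
proof -
  have "step_weight w B = step_weight w 0 / (1 + sqrt B)"
    by (simp add: step_weight_def)
  moreover have "0 < step_weight w 0" "0 < 1 + sqrt B"
    using assms by (simp_all add: step_weight_pos add_pos_nonneg)
  ultimately have "ln (step_weight w B) = ln (step_weight w 0) - ln (1 + sqrt B)"
    by (simp add: ln_div)
  moreover have "ln (1 + sqrt B) \<le> sqrt B"
    using assms by (simp add: ln_add_one_self_le_self)
  ultimately show ?thesis
    by linarith
qed

lemma prod_mult_exp_ge:
  fixes c :: "'a \<Rightarrow> real"
  assumes P: "finite P" and \<beta>: "0 < \<beta>" "\<beta> \<le> 1" and N: "real (card P) \<le> N" and c: "(\<Sum>p\<in>P. c p) \<le> C"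
  shows "exp (N * ln \<beta> - C) \<le> (\<Prod>p\<in>P. \<beta> * exp (- c p))"
proof -
  have "N * ln \<beta> \<le> real (card P) * ln \<beta>"
    using \<beta> N by (intro mult_right_mono_neg) auto
  then have "exp (N * ln \<beta> - C) \<le> exp (real (card P) * ln \<beta> - (\<Sum>p\<in>P. c p))"
    using c by simp
  also have "\<dots> = \<beta> ^ card P * exp (\<Sum>p\<in>P. - c p)"
    using \<beta> by (simp add: exp_diff exp_of_nat_mult[of "card P"] sum_negf exp_minus divide_inverse)
  also have "\<dots> = (\<Prod>p\<in>P. \<beta> * exp (- c p))"
    using P by (simp add: prod.distrib exp_sum)
  finally show ?thesis .
qed

lemma prod_step_weight_ge:
  fixes P :: "real set"
  assumes w: "0 < w" and b0: "0 < b0" and T: "1 \<le> T"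
    and P: "finite P" "P \<subseteq> ({l<..<l + sqrt T} \<union> {r - sqrt T<..<r}) \<inter> {l<..<r}" "real (card P) \<le> b0 * T"
  shows "exp (- (- b0 * ln (step_weight w 0) + b0 * sqrt b0 + 8 * b1\<^sup>2) * T powr (5 / 2)) \<le>
    (\<Prod>p\<in>P. step_weight w (b0 * T) * exp (- step_cost l r (b1 * T) (prev_time P l p) p))"
proof -
  define A where "A = - ln (step_weight w 0)"
  define X where "X = T powr (5 / 2)"
  have A: "0 \<le> A"
    using step_weight_pos[OF w, of 0] step_weight_le_1[OF w, of 0] by (simp add: A_def)
  have X: "X = T\<^sup>2 * sqrt T"
  proof -
    have "X = T powr 2 * T powr (1 / 2)"
      unfolding X_def powr_add[symmetric] by simp
    then show ?thesis
      using T by (simp add: powr_half_sqrt powr_numeral)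
  qed
  have "T \<le> X" "T * sqrt T \<le> X"
    using T by (auto simp: X power2_eq_square intro: order_trans[OF _ mult_right_mono[of 1 T]])
  have "- (b0 * A + b0 * sqrt b0 + 8 * b1\<^sup>2) * X \<le> b0 * T * (- A - sqrt (b0 * T)) - 8 * (b1 * T)\<^sup>2 * sqrt T"
  proof -
    have "b0 * A * T \<le> b0 * A * X" "b0 * sqrt b0 * (T * sqrt T) \<le> b0 * sqrt b0 * X"
      using \<open>T \<le> X\<close> \<open>T * sqrt T \<le> X\<close> A b0 by (auto intro: mult_left_mono)
    moreover have "8 * (b1 * T)\<^sup>2 * sqrt T = 8 * b1\<^sup>2 * X"
      by (simp add: X power_mult_distrib)
    ultimately show ?thesis
      unfolding \<open>8 * (b1 * T)\<^sup>2 * sqrt T = 8 * b1\<^sup>2 * X\<close> by (simp add: real_sqrt_mult algebra_simps)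
  qed
  also have "\<dots> \<le> b0 * T * ln (step_weight w (b0 * T)) - 8 * (b1 * T)\<^sup>2 * sqrt T"
    using ln_step_weight_ge[OF w, of "b0 * T"] b0 T by (simp add: A_def mult_left_mono)
  finally have "exp (- (b0 * A + b0 * sqrt b0 + 8 * b1\<^sup>2) * X) \<le>
      exp (b0 * T * ln (step_weight w (b0 * T)) - 8 * (b1 * T)\<^sup>2 * sqrt T)"
    by simp
  also have "\<dots> \<le> (\<Prod>p\<in>P. step_weight w (b0 * T) * exp (- step_cost l r (b1 * T) (prev_time P l p) p))"
    using b0 T by (intro prod_mult_exp_ge P(1,3) step_weight_pos step_weight_le_1 w sum_step_cost_le P(2)) auto
  finally show ?thesis
    by (simp add: A_def X_def)
qed

section \<open>The tube lies in W and H\<close>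

lemma lipschitz_le_tent:
  fixes g :: "real \<Rightarrow> real"
  assumes lip: "\<forall>x\<in>{l..r}. \<forall>y\<in>{l..r}. \<bar>g x - g y\<bar> \<le> K * \<bar>x - y\<bar>"
    and g: "g l = 0" "g r = 0" and s: "l \<le> s" "s \<le> r"
  shows "g s \<le> K * min (s - l) (r - s)"
proof -
  have "\<bar>g s - g l\<bar> \<le> K * \<bar>s - l\<bar>" "\<bar>g s - g r\<bar> \<le> K * \<bar>s - r\<bar>"
    by (rule lip[rule_format]; use s in simp)+
  then have "g s \<le> K * (s - l)" "g s \<le> K * (r - s)"
    using g s by (simp_all add: abs_le_iff)
  then show ?thesis
    by (simp add: min_def)
qed

lemma le_interpolation:
  fixes \<theta> u v \<delta> :: real
  assumes "0 \<le> \<theta>" "\<theta> \<le> 1" "\<delta> \<le> u" "\<delta> \<le> v"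
  shows "\<delta> \<le> u + \<theta> * (v - u)"
proof -
  have "(1 - \<theta>) * \<delta> + \<theta> * \<delta> \<le> (1 - \<theta>) * u + \<theta> * v"
    using assms by (intro add_mono mult_left_mono) auto
  then show ?thesis
    by (simp add: algebra_simps)
qed

lemma tube_centre_diff_ge:
  assumes "l < r" "l \<le> s" "s \<le> r" "\<delta> \<le> a - a'" "\<delta> \<le> b - b'"
  shows "\<delta> \<le> tube_centre l r a b K s - tube_centre l r a' b' K s"
proof -
  define \<theta> where "\<theta> = (s - l) / (r - l)"
  have "tube_centre l r a b K s - tube_centre l r a' b' K s = (a - a') + \<theta> * ((b - b') - (a - a'))"
    unfolding tube_centre_def \<theta>_def[symmetric] by (simp add: algebra_simps)
  moreover have "0 \<le> \<theta>" "\<theta> \<le> 1"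
    using assms by (auto simp: \<theta>_def)
  ultimately show ?thesis
    using le_interpolation[of \<theta> \<delta> "a - a'" "b - b'"] assms by simp
qed

lemma tube_centre_ge:
  assumes "l < r" "l \<le> s" "s \<le> r" "\<delta> \<le> a" "\<delta> \<le> b"
  shows "\<delta> + K * min (s - l) (r - s) \<le> tube_centre l r a b K s"
  using le_interpolation[of "(s - l) / (r - l)" \<delta> a b] assms
  by (simp add: tube_centre_def)

lemma tube_centre_minus_ge:
  fixes am ap :: "nat \<Rightarrow> real" and g :: "real \<Rightarrow> real"
  assumes lr: "l < r" and p: "l \<le> p" "p \<le> r"
    and g: "g l = 0" "g r = 0" "\<forall>x\<in>{l..r}. \<forall>y\<in>{l..r}. \<bar>g x - g y\<bar> \<le> K * \<bar>x - y\<bar>"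
    and gaps: "\<forall>j\<in>{1..<k}. \<delta> \<le> am j - am (j + 1) \<and> \<delta> \<le> ap j - ap (j + 1)" and \<delta>: "0 \<le> \<delta>"
    and bottom: "\<epsilon> \<le> am k" "\<epsilon> \<le> ap k"
    and j: "j \<in> {1..k}"
  shows "\<epsilon> \<le> tube_centre l r (am j) (ap j) K p - g p"
proof -
  have "1 \<le> j" "j \<le> k"
    using j by auto
  from this(2) have "tube_centre l r (am k) (ap k) K p \<le> tube_centre l r (am j) (ap j) K p"
  proof (induction rule: inc_induct)
    case (step n)
    then have "\<delta> \<le> tube_centre l r (am n) (ap n) K p - tube_centre l r (am (Suc n)) (ap (Suc n)) K p"
      using gaps \<open>1 \<le> j\<close> lr p by (intro tube_centre_diff_ge) auto
    then show ?case
      using step.IH \<delta> by linarith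
  qed simp
  moreover have "\<epsilon> + K * min (p - l) (r - p) \<le> tube_centre l r (am k) (ap k) K p"
    using bottom lr p by (intro tube_centre_ge) auto
  moreover have "g p \<le> K * min (p - l) (r - p)"
    using g p by (intro lipschitz_le_tent) auto
  ultimately show ?thesis
    by linarith
qed

lemma tube_subset_W_H:
  fixes c :: "nat \<Rightarrow> real \<Rightarrow> real"
  assumes k: "1 \<le> k" and pos: "0 < \<mu> * lam1 * T"
    and w: "2 * w \<le> (1 - \<mu>) * lam0 * sqrt T" "w \<le> (1 - \<mu>) * lam1 * T"
    and gap: "\<And>j p. j \<in> {1..<k} \<Longrightarrow> p \<in> P \<Longrightarrow> lam0 * sqrt T \<le> c j p - c (j + 1) p"
    and above: "\<And>j p. j \<in> {1..k} \<Longrightarrow> p \<in> P \<Longrightarrow> lam1 * T \<le> c j p - g p"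
    and x: "x \<in> space (PiM ({1..k} \<times> P) (\<lambda>_. lborel))"
      "\<And>j p. j \<in> {1..k} \<Longrightarrow> p \<in> P \<Longrightarrow> \<bar>x (j, p) - c j p\<bar> \<le> w"
  shows "x \<in> W_event k P g \<inter> H_event k P g \<mu> lam0 lam1 T"
proof -
  have "\<mu> * lam0 * sqrt T \<le> x (j, p) - x (j + 1, p)" if "p \<in> P" "j \<in> {1..<k}" for p j
    using gap[OF that(2,1)] x(2)[of j p] x(2)[of "j + 1" p] w(1) that by (auto simp: algebra_simps abs_le_iff)
  moreover have "\<mu> * lam1 * T \<le> x (j, p) - g p" if "j \<in> {1..k}" "p \<in> P" for j p
    using above[OF that] x(2)[OF that] w(2) by (auto simp: algebra_simps abs_le_iff)
  ultimately show ?thesis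
    using x(1) k pos by (fastforce simp: W_event_def H_event_def)
qed

lemma measure_W_inter_H_ge:
  fixes am ap :: "nat \<Rightarrow> real" and g :: "real \<Rightarrow> real"
  assumes k: "1 \<le> k" and \<mu>: "0 < \<mu>" "\<mu> < 1" and lam: "0 < lam0" "0 < lam1" and T: "1 \<le> T"
    and P: "finite P" "P \<subseteq> {l<..<r}" and lr: "l < r" and B: "r - l \<le> B" and K: "0 \<le> K"
    and g: "g l = 0" "g r = 0" "\<forall>x\<in>{l..r}. \<forall>y\<in>{l..r}. \<bar>g x - g y\<bar> \<le> K * \<bar>x - y\<bar>"
    and gaps: "\<forall>j\<in>{1..<k}. lam0 * sqrt T \<le> am j - am (j + 1) \<and> lam0 * sqrt T \<le> ap j - ap (j + 1)"
    and bottom: "lam1 * T \<le> am k" "lam1 * T \<le> ap k"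
    and w: "0 < w" "2 * w \<le> (1 - \<mu>) * lam0" "w \<le> (1 - \<mu>) * lam1"
  shows "(\<Prod>p\<in>P. step_weight w B * exp (- step_cost l r K (prev_time P l p) p)) ^ k \<le>
    measure (free_fdd k l r am ap P) (W_event k P g \<inter> H_event k P g \<mu> lam0 lam1 T)"
proof -
  interpret prob_space "free_fdd k l r am ap P"
    using P lr by (rule prob_space_free_fdd)
  define c where "c j = tube_centre l r (am j) (ap j) K" for j
  have s: "l \<le> p" "p \<le> r" if "p \<in> P" for p
    using that P(2) by auto
  have gap: "lam0 * sqrt T \<le> c j p - c (j + 1) p" if "j \<in> {1..<k}" "p \<in> P" for j p
    using gaps that s[OF that(2)] lr by (auto simp: c_def intro: tube_centre_diff_ge)
  have above: "lam1 * T \<le> c j p - g p" if "j \<in> {1..k}" "p \<in> P" for j p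
    unfolding c_def using lr s[OF that(2)] g gaps bottom lam T that(1) by (intro tube_centre_minus_ge) auto
  have "(\<Prod>p\<in>P. ennreal (step_weight w B * exp (- step_cost l r K (prev_time P l p) p))) ^ k \<le>
      emeasure (free_fdd k l r am ap P) (W_event k P g \<inter> H_event k P g \<mu> lam0 lam1 T)"
  proof (rule emeasure_free_fdd_ge[OF P lr, where A = "\<lambda>j p. {c j p - w..c j p + w}"])
    show "am j \<in> {c j l - w..c j l + w}" for j
      using w lr by (simp add: c_def tube_centre_def)
    show "ennreal (step_weight w B * exp (- step_cost l r K (prev_time P l p) p)) \<le>
      (\<integral>\<^sup>+y. ennreal (normal_density (bridge_mean (prev_time P l p) v r (ap j) p) (bridge_sd (prev_time P l p) r p) y) *
        indicator {c j p - w..c j p + w} y \<partial>lborel)"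
      if "p \<in> P" "v \<in> {c j (prev_time P l p) - w..c j (prev_time P l p) + w}" for j p v
    proof -
      have "P \<subseteq> {l<..}" "p < r"
        using P(2) that(1) by auto
      then show ?thesis
        using that prev_time_bounds[OF P(1) that(1)] B unfolding c_def
        by (intro bridge_tube_mass_ge[OF w(1) K]) (auto simp: abs_le_iff)
    qed
    show "W_event k P g \<inter> H_event k P g \<mu> lam0 lam1 T \<in> sets (PiM ({1..k} \<times> P) (\<lambda>_. lborel))"
      using sets_W_event[OF P(1)] sets_H_event[OF k P(1)] by blast
    show "x \<in> W_event k P g \<inter> H_event k P g \<mu> lam0 lam1 T"
      if "x \<in> space (PiM ({1..k} \<times> P) (\<lambda>_. lborel))"
        "\<And>j p. j \<in> {1..k} \<Longrightarrow> p \<in> P \<Longrightarrow> x (j, p) \<in> {c j p - w..c j p + w}" for x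
    proof (rule tube_subset_W_H[where c = c, OF k _ _ _ gap above that(1)])
      show "0 < \<mu> * lam1 * T" using \<mu> lam T by simp
      show "2 * w \<le> (1 - \<mu>) * lam0 * sqrt T" "w \<le> (1 - \<mu>) * lam1 * T"
        using w \<mu> lam T by (auto intro: order_trans[OF _ mult_left_mono[of 1]])
      show "\<bar>x (j, p) - c j p\<bar> \<le> w" if "j \<in> {1..k}" "p \<in> P" for j p
        using \<open>\<And>j p. j \<in> {1..k} \<Longrightarrow> p \<in> P \<Longrightarrow> x (j, p) \<in> {c j p - w..c j p + w}\<close>[OF that]
        by (simp add: abs_le_iff)
    qed
  qed simp
  moreover have "0 \<le> step_weight w B * exp (- step_cost l r K (prev_time P l p) p)" for p
    using step_weight_pos[OF w(1), of B] B lr by simp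
  ultimately show ?thesis
    by (simp add: emeasure_eq_measure prod_ennreal ennreal_power prod_nonneg)
qed

theorem mainTheorem6:
  fixes k :: nat and b0 b1 lam0 lam1 \<mu> :: real
  assumes "k \<ge> 1" and "b0 > 0" and "b1 > 0" and "lam0 > 0" and "lam1 > 0"
    and "0 < \<mu>" and "\<mu> < 1"
  shows "\<exists>C>0. \<forall>b2>0. \<forall>T l r (am :: nat \<Rightarrow> real) (ap :: nat \<Rightarrow> real) (g :: real \<Rightarrow> real) (P :: real set).
     T \<ge> 10 \<longrightarrow> l < r \<longrightarrow> g l = 0 \<longrightarrow> g r = 0 \<longrightarrow>
     finite P \<longrightarrow> P \<subseteq> ({l<..<l + sqrt T} \<union> {r - sqrt T<..<r}) \<inter> {l<..<r} \<longrightarrow>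
     r - l \<le> b0 * T \<longrightarrow> real (card P) \<le> b0 * T \<longrightarrow>
     (\<forall>x\<in>{l..r}. \<forall>y\<in>{l..r}. \<bar>g x - g y\<bar> \<le> b1 * T * \<bar>x - y\<bar>) \<longrightarrow>
     (\<forall>j\<in>{1..<k}. am j - am (j+1) \<ge> lam0 * sqrt T \<and> ap j - ap (j+1) \<ge> lam0 * sqrt T) \<longrightarrow>
     am k - g l \<ge> lam1 * T \<longrightarrow> ap k - g r \<ge> lam1 * T \<longrightarrow>
     am 1 - g l \<le> b2 * T\<^sup>2 \<longrightarrow> ap 1 - g r \<le> b2 * T\<^sup>2 \<longrightarrow>
     PL_H k l r am ap P g \<mu> lam0 lam1 T \<ge> (1 / C) * exp (- C * T powr (5/2))"
proof -
  define w where "w = min ((1 - \<mu>) * lam0 / 2) ((1 - \<mu>) * lam1)"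
  define C1 where "C1 = - b0 * ln (step_weight w 0) + b0 * sqrt b0 + 8 * b1\<^sup>2"
  have w: "0 < w" "2 * w \<le> (1 - \<mu>) * lam0" "w \<le> (1 - \<mu>) * lam1"
    using assms by (auto simp: w_def)
  have "ln (step_weight w 0) \<le> 0"
    using step_weight_pos[OF w(1), of 0] step_weight_le_1[OF w(1), of 0] by simp
  then have C1: "0 \<le> C1"
    unfolding C1_def using assms(2) by (intro add_nonneg_nonneg) (auto intro: mult_nonneg_nonpos)
  show ?thesis
  proof (intro exI[of _ "real k * C1 + 1"] conjI allI impI)
    fix b2 T l r and am ap :: "nat \<Rightarrow> real" and g :: "real \<Rightarrow> real" and P :: "real set"
    assume "b2 > 0" and "T \<ge> 10" and lr: "l < r" and g: "g l = 0" "g r = 0"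
      and P: "finite P" "P \<subseteq> ({l<..<l + sqrt T} \<union> {r - sqrt T<..<r}) \<inter> {l<..<r}"
      and B: "r - l \<le> b0 * T" and card: "real (card P) \<le> b0 * T"
      and lip: "\<forall>x\<in>{l..r}. \<forall>y\<in>{l..r}. \<bar>g x - g y\<bar> \<le> b1 * T * \<bar>x - y\<bar>"
      and gaps: "\<forall>j\<in>{1..<k}. am j - am (j+1) \<ge> lam0 * sqrt T \<and> ap j - ap (j+1) \<ge> lam0 * sqrt T"
      and bottom: "am k - g l \<ge> lam1 * T" "ap k - g r \<ge> lam1 * T"
      and "am 1 - g l \<le> b2 * T\<^sup>2" "ap 1 - g r \<le> b2 * T\<^sup>2"
      \<comment> \<open>not needed: the tube only uses the gaps and the lowest curve\<close>
    then have T: "1 \<le> T" and P': "P \<subseteq> {l<..<r}"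
      by auto
    have "exp (- C1 * T powr (5 / 2)) ^ k \<le>
        (\<Prod>p\<in>P. step_weight w (b0 * T) * exp (- step_cost l r (b1 * T) (prev_time P l p) p)) ^ k"
      unfolding C1_def using prod_step_weight_ge[OF w(1) assms(2) T P card]
      by (intro power_mono) auto
    also have "\<dots> \<le> measure (free_fdd k l r am ap P) (W_event k P g \<inter> H_event k P g \<mu> lam0 lam1 T)"
      using assms T P(1) P' lr B g lip gaps bottom w by (intro measure_W_inter_H_ge) auto
    also have "\<dots> \<le> PL_H k l r am ap P g \<mu> lam0 lam1 T"
      using assms(1) P(1) P' lr by (rule measure_le_PL_H)
    finally have "exp (- (real k * C1) * T powr (5 / 2)) \<le> PL_H k l r am ap P g \<mu> lam0 lam1 T"
      by (simp add: exp_of_nat_mult[symmetric] mult.assoc)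
    moreover have "1 / (real k * C1 + 1) * exp (- (real k * C1 + 1) * T powr (5 / 2)) \<le>
        1 * exp (- (real k * C1) * T powr (5 / 2))"
      using C1 by (intro mult_mono) (auto simp: algebra_simps divide_le_eq_1)
    ultimately show "PL_H k l r am ap P g \<mu> lam0 lam1 T \<ge> 1 / (real k * C1 + 1) * exp (- (real k * C1 + 1) * T powr (5 / 2))"
      by linarith
  qed (use C1 in \<open>simp add: add_nonneg_pos\<close>)
qed

end
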